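(* Let $X$ be a finite set, let $N$ be a rooted phylogenetic network on $X$, and let $\widetilde{N}$ be the normalisation of $N$. Suppose that $u,v$ are vertices of $\widetilde{N}$ and that there is a directed path $p$ from $u$ to $v$ in $\widetilde{N}$. Then there is a directed path in $N$ from $u$ to $v$ that contains every vertex of $p$ (and possibly additional vertices).
   Context: A rooted phylogenetic network on a finite set $X$ is a finite acyclic directed graph $N$ with a single vertex of in-degree $0$ (the root $\rho$), all other vertices being of one of three types: (1) in-degree $1$ and out-degree $0$ (the leaves, which form exactly the set $X$); (2) in-degree $1$ and out-degree at least $2$; (3) out-degree $1$ and in-degree at least $2$ (reticulate vertices). A vertex $v$ of $N$ is visible if there is a leaf $x\in X$ such that every directed path from $\rho$ to $x$ passes through $v$; the root and all leaves are visible. Let $V_{\rm vis}(N)$ be the set of visible vertices. Define the directed graph ${\rm Cov}(N)$ with vertex set $V_{\rm vis}(N)$ as follows: for each pair $u\neq v$ of visible vertices such that $N$ has a directed path from $u$ to $v$, put an arc $(u,v)$; then delete every arc $(u,v)$ for which there is also a directed path of length at least $2$ from $u$ to $v$ in this graph (so ${\rm Cov}(N)$ is the Hasse diagram of the reachability partial order on $V_{\rm vis}(N)$). A vertex is subdividing if its in-degree and out-degree are both $1$. The normalisation $\widetilde{N}$ of $N$ is the directed graph obtained from ${\rm Cov}(N)$ by suppressing every subdividing vertex (i.e. replacing each maximal path whose interior vertices are subdividing by a single arc between its endpoints). *)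

theory Defs
  imports Main
begin

definition indeg :: "('v \<times> 'v) set \<Rightarrow> 'v \<Rightarrow> nat" where
  "indeg A v = card {u. (u, v) \<in> A}"

definition outdeg :: "('v \<times> 'v) set \<Rightarrow> 'v \<Rightarrow> nat" where
  "outdeg A v = card {w. (v, w) \<in> A}"

definition dpath :: "'v set \<Rightarrow> ('v \<times> 'v) set \<Rightarrow> 'v list \<Rightarrow> bool" where
  "dpath V A ps \<longleftrightarrow> ps \<noteq> [] \<and> set ps \<subseteq> V \<and>
     (\<forall>i. Suc i < length ps \<longrightarrow> (ps ! i, ps ! Suc i) \<in> A)"

definition dpath_from_to :: "'v set \<Rightarrow> ('v \<times> 'v) set \<Rightarrow> 'v \<Rightarrow> 'v \<Rightarrow> 'v list \<Rightarrow> bool" where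
  "dpath_from_to V A u v ps \<longleftrightarrow> dpath V A ps \<and> hd ps = u \<and> last ps = v"

definition phylo_network :: "'v set \<Rightarrow> ('v \<times> 'v) set \<Rightarrow> 'v \<Rightarrow> 'v set \<Rightarrow> bool" where
  "phylo_network V A r X \<longleftrightarrow>
     finite V \<and> A \<subseteq> V \<times> V \<and> acyclic A \<and>
     r \<in> V \<and> indeg A r = 0 \<and> X \<subseteq> V - {r} \<and>
     (\<forall>v \<in> V - {r}.
        (v \<in> X \<and> indeg A v = 1 \<and> outdeg A v = 0) \<or>
        (v \<notin> X \<and> indeg A v = 1 \<and> outdeg A v \<ge> 2) \<or>
        (v \<notin> X \<and> outdeg A v = 1 \<and> indeg A v \<ge> 2))"

definition visible :: "'v set \<Rightarrow> ('v \<times> 'v) set \<Rightarrow> 'v \<Rightarrow> 'v set \<Rightarrow> 'v \<Rightarrow> bool" where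
  "visible V A r X v \<longleftrightarrow> v \<in> V \<and>
     (v = r \<or> v \<in> X \<or>
      (\<exists>x \<in> X. \<forall>ps. dpath_from_to V A r x ps \<longrightarrow> v \<in> set ps))"

definition Vvis :: "'v set \<Rightarrow> ('v \<times> 'v) set \<Rightarrow> 'v \<Rightarrow> 'v set \<Rightarrow> 'v set" where
  "Vvis V A r X = {v. visible V A r X v}"

definition reach_vis :: "'v set \<Rightarrow> ('v \<times> 'v) set \<Rightarrow> 'v \<Rightarrow> 'v set \<Rightarrow> ('v \<times> 'v) set" where
  "reach_vis V A r X = {(u, v). u \<in> Vvis V A r X \<and> v \<in> Vvis V A r X \<and> u \<noteq> v \<and> (u, v) \<in> A\<^sup>+}"

definition cov_arcs :: "'v set \<Rightarrow> ('v \<times> 'v) set \<Rightarrow> 'v \<Rightarrow> 'v set \<Rightarrow> ('v \<times> 'v) set" where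
  "cov_arcs V A r X = reach_vis V A r X - (reach_vis V A r X O (reach_vis V A r X)\<^sup>+)"

definition cov_subdiv :: "'v set \<Rightarrow> ('v \<times> 'v) set \<Rightarrow> 'v \<Rightarrow> 'v set \<Rightarrow> 'v set" where
  "cov_subdiv V A r X = {v \<in> Vvis V A r X.
      indeg (cov_arcs V A r X) v = 1 \<and> outdeg (cov_arcs V A r X) v = 1}"

definition norm_vertices :: "'v set \<Rightarrow> ('v \<times> 'v) set \<Rightarrow> 'v \<Rightarrow> 'v set \<Rightarrow> 'v set" where
  "norm_vertices V A r X = Vvis V A r X - cov_subdiv V A r X"

definition norm_arcs :: "'v set \<Rightarrow> ('v \<times> 'v) set \<Rightarrow> 'v \<Rightarrow> 'v set \<Rightarrow> ('v \<times> 'v) set" where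
  "norm_arcs V A r X = {(a, b). a \<in> norm_vertices V A r X \<and> b \<in> norm_vertices V A r X \<and>
     (\<exists>ps. dpath_from_to (Vvis V A r X) (cov_arcs V A r X) a b ps \<and> length ps \<ge> 2 \<and>
        (\<forall>i. 0 < i \<and> Suc i < length ps \<longrightarrow> ps ! i \<in> cov_subdiv V A r X))}"

end

theory Submission
  imports Defs
begin

text \<open>Every arc of the normalisation comes from a path of Cov(N), and every arc of Cov(N)
  from a path of N. Hence each arc of a path in the normalisation can be replaced by a
  path of N between its endpoints, and concatenating these gives the required path.\<close>

lemma dpath_singleton [simp]: "dpath V A [x] \<longleftrightarrow> x \<in> V"
  by (auto simp: dpath_def)

lemma dpath_Cons_Cons [simp]:
  "dpath V A (x # y # ys) \<longleftrightarrow> x \<in> V \<and> (x, y) \<in> A \<and> dpath V A (y # ys)"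
  by (auto simp: dpath_def nth_Cons split: nat.splits)

lemma dpath_imp_trancl:
  "dpath V A ps \<Longrightarrow> 2 \<le> length ps \<Longrightarrow> (hd ps, last ps) \<in> A\<^sup>+"
proof (induction ps rule: induct_list012)
  case (3 x y zs)
  then show ?case by (cases zs) auto
qed auto

lemma dpath_append_at:
  "dpath V A (xs @ [b]) \<Longrightarrow> dpath V A (b # ys) \<Longrightarrow> dpath V A (xs @ b # ys)"
proof (induction xs)
  case (Cons x xs)
  then show ?case by (cases xs) auto
qed auto

lemma trancl_imp_dpath:
  assumes "(a, b) \<in> A\<^sup>+" and "A \<subseteq> V \<times> V"
  shows "\<exists>qs. dpath V A (a # qs @ [b])"
  using assms(1)
proof (induction rule: converse_trancl_induct)
  case (base a)
  then show ?case using assms(2) by (intro exI[of _ "[]"]) auto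
next
  case (step a c)
  then obtain qs where "dpath V A (c # qs @ [b])" by blast
  then show ?case using step assms(2) by (intro exI[of _ "c # qs"]) auto
qed

lemma dpath_refine_to_trancl:
  assumes "dpath W R p" and "R \<subseteq> A\<^sup>+" and "W \<subseteq> V" and "A \<subseteq> V \<times> V"
  shows "\<exists>q. dpath V A q \<and> hd q = hd p \<and> last q = last p \<and> set p \<subseteq> set q"
  using assms(1)
proof (induction p rule: induct_list012)
  case (2 x)
  then show ?case using assms(3) by (intro exI[of _ "[x]"]) auto
next
  case (3 x y zs)
  then have xy: "(x, y) \<in> A\<^sup>+" and "dpath W R (y # zs)" using assms(2) by auto
  then obtain q where q: "dpath V A q" "hd q = y" "last q = last (y # zs)"
      "set (y # zs) \<subseteq> set q"
    using "3.IH"(2) by auto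
  then obtain q' where q': "q = y # q'" by (cases q) (auto simp: dpath_def)
  obtain qs where "dpath V A (x # qs @ [y])"
    using trancl_imp_dpath[OF xy assms(4)] by blast
  then have "dpath V A ((x # qs) @ y # q')"
    using dpath_append_at q(1) q' by (metis append_Cons)
  then show ?case using q q' by (intro exI[of _ "(x # qs) @ y # q'"]) auto
qed (simp add: dpath_def)

lemma norm_vertices_subset: "norm_vertices V A r X \<subseteq> V"
  unfolding norm_vertices_def Vvis_def visible_def by blast

lemma cov_arcs_subset_trancl: "cov_arcs V A r X \<subseteq> A\<^sup>+"
  unfolding cov_arcs_def reach_vis_def by blast

lemma norm_arcs_subset_trancl: "norm_arcs V A r X \<subseteq> A\<^sup>+"
proof
  fix e assume "e \<in> norm_arcs V A r X"
  then obtain a b ps where e: "e = (a, b)" and "length ps \<ge> 2"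
    and "dpath_from_to (Vvis V A r X) (cov_arcs V A r X) a b ps"
    unfolding norm_arcs_def by blast
  then have "(a, b) \<in> (cov_arcs V A r X)\<^sup>+"
    using dpath_imp_trancl[of _ _ ps] by (auto simp: dpath_from_to_def)
  then have "(a, b) \<in> (A\<^sup>+)\<^sup>+"
    by (rule trancl_mono[OF _ cov_arcs_subset_trancl])
  then show "e \<in> A\<^sup>+" using e by simp
qed

theorem lemma1:
  fixes V :: "'v set" and A :: "('v \<times> 'v) set" and r :: 'v and X :: "'v set"
    and u v :: 'v and p :: "'v list"
  assumes "finite X"
    and "phylo_network V A r X"
    and "u \<in> norm_vertices V A r X" and "v \<in> norm_vertices V A r X"
    and "dpath_from_to (norm_vertices V A r X) (norm_arcs V A r X) u v p"
  shows "\<exists>q. dpath_from_to V A u v q \<and> set p \<subseteq> set q"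
proof -
  have "A \<subseteq> V \<times> V" using assms(2) by (simp add: phylo_network_def)
  with assms(5) show ?thesis
    using dpath_refine_to_trancl[OF _ norm_arcs_subset_trancl norm_vertices_subset]
    by (fastforce simp: dpath_from_to_def)
qed

end
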